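(* Let $\wp\colon\tilde X\to X$ be a $G$-admissible $2$-cover of connected graphs, where $G\leq\mathrm{Aut}\,X$ is vertex-transitive and edge-transitive. Then $\wp$ is $G$-split with a sectional complement if and only if $\wp$ is the canonical double cover. (Equivalently, if $\wp$ is $G$-split, then it is split-transitive relative to $G$ if and only if $\wp$ is not the canonical double cover.)
   Context: Graphs are finite and simple; maps are composed on the right. A regular covering projection $\wp\colon\tilde X\to X$ is a surjective graph homomorphism, locally bijective on neighbourhoods, such that the group $\mathrm{CT}(\wp)$ of covering transformations (automorphisms $c$ of $\tilde X$ with $c\wp=\wp$) acts regularly on each fibre; a $2$-cover has $\mathrm{CT}(\wp)\cong\mathbb{Z}_2$. A lift of $g\in\mathrm{Aut}\,X$ is $\tilde g\in\mathrm{Aut}\,\tilde X$ with $\wp g=\tilde g\wp$; $\wp$ is $G$-admissible if every $g\in G$ has a lift, and then the lifted group $\tilde G$ is the group of all such lifts. $\wp$ is $G$-split if $\mathrm{CT}(\wp)$ has a complement in $\tilde G$. A section is a vertex set of $\tilde X$ meeting each fibre in exactly one vertex; a complement is sectional if it leaves some section invariant and transitive if it is transitive on $V(\tilde X)$; $\wp$ is split-transitive relative to $G$ if it is $G$-split and all complements of $\mathrm{CT}(\wp)$ in $\tilde G$ are transitive. The canonical double cover of $X$ is the $2$-cover obtained as the derived graph of the constant voltage assignment $\zeta(x)=1$ for all arcs $x$ (vertex set $V(X)\times\mathbb{Z}_2$, $(u,i)\sim(v,i+1)$ whenever $u\sim v$, projection $(u,i)\mapsto u$); "$\wp$ is the canonical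 double cover" means $\wp$ is isomorphic to this projection (via an isomorphism of covering graphs commuting with the projections). *)

theory Defs
  imports Main
begin

definition simple_graph :: "'a set \<Rightarrow> ('a \<Rightarrow> 'a \<Rightarrow> bool) \<Rightarrow> bool" where
  "simple_graph V E \<longleftrightarrow> finite V \<and> (\<forall>u v. E u v \<longrightarrow> u \<in> V \<and> v \<in> V)
     \<and> (\<forall>u v. E u v \<longrightarrow> E v u) \<and> (\<forall>u. \<not> E u u)"

definition connected_graph :: "'a set \<Rightarrow> ('a \<Rightarrow> 'a \<Rightarrow> bool) \<Rightarrow> bool" where
  "connected_graph V E \<longleftrightarrow> V \<noteq> {} \<and> (\<forall>u\<in>V. \<forall>v\<in>V. E\<^sup>*\<^sup>* u v)"

definition aut :: "'a set \<Rightarrow> ('a \<Rightarrow> 'a \<Rightarrow> bool) \<Rightarrow> ('a \<Rightarrow> 'a) set" where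
  "aut V E = {f. bij_betw f V V \<and> (\<forall>x. x \<notin> V \<longrightarrow> f x = x)
                \<and> (\<forall>u\<in>V. \<forall>v\<in>V. E (f u) (f v) \<longleftrightarrow> E u v)}"

definition is_subgroup :: "('a \<Rightarrow> 'a) set \<Rightarrow> ('a \<Rightarrow> 'a) set \<Rightarrow> bool" where
  "is_subgroup H A \<longleftrightarrow> H \<subseteq> A \<and> id \<in> H \<and> (\<forall>g\<in>H. \<forall>h\<in>H. g \<circ> h \<in> H)
     \<and> (\<forall>g\<in>H. \<exists>h\<in>H. g \<circ> h = id \<and> h \<circ> g = id)"

definition vertex_transitive :: "'a set \<Rightarrow> ('a \<Rightarrow> 'a) set \<Rightarrow> bool" where
  "vertex_transitive V G \<longleftrightarrow> (\<forall>u\<in>V. \<forall>v\<in>V. \<exists>g\<in>G. g u = v)"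

definition edge_transitive :: "('a \<Rightarrow> 'a \<Rightarrow> bool) \<Rightarrow> ('a \<Rightarrow> 'a) set \<Rightarrow> bool" where
  "edge_transitive E G \<longleftrightarrow> (\<forall>u v x y. E u v \<longrightarrow> E x y \<longrightarrow>
      (\<exists>g\<in>G. {g u, g v} = {x, y}))"

definition covering_projection ::
  "'b set \<Rightarrow> ('b \<Rightarrow> 'b \<Rightarrow> bool) \<Rightarrow> 'a set \<Rightarrow> ('a \<Rightarrow> 'a \<Rightarrow> bool) \<Rightarrow> ('b \<Rightarrow> 'a) \<Rightarrow> bool" where
  "covering_projection V' E' V E p \<longleftrightarrow> p ` V' = V
     \<and> (\<forall>x y. E' x y \<longrightarrow> E (p x) (p y))
     \<and> (\<forall>x\<in>V'. bij_betw p {y\<in>V'. E' x y} {u\<in>V. E (p x) u})"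

definition fibre :: "'b set \<Rightarrow> ('b \<Rightarrow> 'a) \<Rightarrow> 'a \<Rightarrow> 'b set" where
  "fibre V' p v = {x\<in>V'. p x = v}"

definition CT :: "'b set \<Rightarrow> ('b \<Rightarrow> 'b \<Rightarrow> bool) \<Rightarrow> ('b \<Rightarrow> 'a) \<Rightarrow> ('b \<Rightarrow> 'b) set" where
  "CT V' E' p = {c\<in>aut V' E'. \<forall>x\<in>V'. p (c x) = p x}"

definition two_cover ::
  "'b set \<Rightarrow> ('b \<Rightarrow> 'b \<Rightarrow> bool) \<Rightarrow> 'a set \<Rightarrow> ('a \<Rightarrow> 'a \<Rightarrow> bool) \<Rightarrow> ('b \<Rightarrow> 'a) \<Rightarrow> bool" where
  "two_cover V' E' V E p \<longleftrightarrow> covering_projection V' E' V E p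
     \<and> card (CT V' E' p) = 2
     \<and> (\<forall>v\<in>V. \<forall>x\<in>fibre V' p v. \<forall>y\<in>fibre V' p v. \<exists>!c\<in>CT V' E' p. c x = y)"

text \<open>Lifts (maps composed on the right: p g = g' p means g (p x) = p (g' x)).\<close>
definition is_lift ::
  "'b set \<Rightarrow> ('b \<Rightarrow> 'b \<Rightarrow> bool) \<Rightarrow> ('b \<Rightarrow> 'a) \<Rightarrow> ('a \<Rightarrow> 'a) \<Rightarrow> ('b \<Rightarrow> 'b) \<Rightarrow> bool" where
  "is_lift V' E' p g g' \<longleftrightarrow> g' \<in> aut V' E' \<and> (\<forall>x\<in>V'. g (p x) = p (g' x))"

definition admissible ::
  "'b set \<Rightarrow> ('b \<Rightarrow> 'b \<Rightarrow> bool) \<Rightarrow> ('b \<Rightarrow> 'a) \<Rightarrow> ('a \<Rightarrow> 'a) set \<Rightarrow> bool" where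
  "admissible V' E' p G \<longleftrightarrow> (\<forall>g\<in>G. \<exists>g'. is_lift V' E' p g g')"

definition lifted_group ::
  "'b set \<Rightarrow> ('b \<Rightarrow> 'b \<Rightarrow> bool) \<Rightarrow> ('b \<Rightarrow> 'a) \<Rightarrow> ('a \<Rightarrow> 'a) set \<Rightarrow> ('b \<Rightarrow> 'b) set" where
  "lifted_group V' E' p G = {g'. \<exists>g\<in>G. is_lift V' E' p g g'}"

definition is_complement ::
  "'b set \<Rightarrow> ('b \<Rightarrow> 'b \<Rightarrow> bool) \<Rightarrow> ('b \<Rightarrow> 'a) \<Rightarrow> ('a \<Rightarrow> 'a) set \<Rightarrow> ('b \<Rightarrow> 'b) set \<Rightarrow> bool" where
  "is_complement V' E' p G K \<longleftrightarrow> is_subgroup K (lifted_group V' E' p G)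
     \<and> K \<inter> CT V' E' p = {id}
     \<and> (\<forall>h\<in>lifted_group V' E' p G. \<exists>k\<in>K. \<exists>c\<in>CT V' E' p. h = k \<circ> c)"

definition G_split ::
  "'b set \<Rightarrow> ('b \<Rightarrow> 'b \<Rightarrow> bool) \<Rightarrow> ('b \<Rightarrow> 'a) \<Rightarrow> ('a \<Rightarrow> 'a) set \<Rightarrow> bool" where
  "G_split V' E' p G \<longleftrightarrow> (\<exists>K. is_complement V' E' p G K)"

definition is_section :: "'b set \<Rightarrow> 'a set \<Rightarrow> ('b \<Rightarrow> 'a) \<Rightarrow> 'b set \<Rightarrow> bool" where
  "is_section V' V p S \<longleftrightarrow> S \<subseteq> V' \<and> (\<forall>v\<in>V. card (S \<inter> fibre V' p v) = 1)"

definition sectional ::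
  "'b set \<Rightarrow> 'a set \<Rightarrow> ('b \<Rightarrow> 'a) \<Rightarrow> ('b \<Rightarrow> 'b) set \<Rightarrow> bool" where
  "sectional V' V p K \<longleftrightarrow> (\<exists>S. is_section V' V p S \<and> (\<forall>k\<in>K. k ` S = S))"

text \<open>Canonical double cover of (V,E): vertices V \<times> Z_2 (Z_2 = bool),
  (u,i) ~ (v,j) iff u ~ v and j = i + 1, projection fst.\<close>
definition cdc_edge :: "('a \<Rightarrow> 'a \<Rightarrow> bool) \<Rightarrow> 'a \<times> bool \<Rightarrow> 'a \<times> bool \<Rightarrow> bool" where
  "cdc_edge E x y \<longleftrightarrow> E (fst x) (fst y) \<and> snd y = (\<not> snd x)"

definition is_canonical_double_cover ::
  "'b set \<Rightarrow> ('b \<Rightarrow> 'b \<Rightarrow> bool) \<Rightarrow> 'a set \<Rightarrow> ('a \<Rightarrow> 'a \<Rightarrow> bool) \<Rightarrow> ('b \<Rightarrow> 'a) \<Rightarrow> bool" where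
  "is_canonical_double_cover V' E' V E p \<longleftrightarrow>
     (\<exists>\<phi>. bij_betw \<phi> V' (V \<times> UNIV)
        \<and> (\<forall>x\<in>V'. \<forall>y\<in>V'. cdc_edge E (\<phi> x) (\<phi> y) \<longleftrightarrow> E' x y)
        \<and> (\<forall>x\<in>V'. fst (\<phi> x) = p x))"

end

theory Submission
  imports Defs
begin

(* Let c be the nontrivial covering transformation, so that the fibres are the pairs {z, c z},
   and let S be a section left invariant by a complement K.  Every g in G has a lift in K, and
   that lift maps S onto S.  If some edge had both ends in S (or, after applying c, both ends
   outside S), edge-transitivity and the uniqueness of edge lifts would force every edge to stay
   on its side of the partition {S, c S}, contradicting connectedness of the cover because z and
   c z lie on different sides.  Hence every edge joins S to c S, and z |-> (p z, [z in S]) is an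
   isomorphism onto the canonical double cover.  Conversely, on the canonical double cover every
   automorphism g of the base lifts to g x id; these lifts form a complement of CT and fix the
   section V x {1}. *)

lemma id_in_aut: "id \<in> aut V E"
  unfolding aut_def by auto

lemma aut_comp: "f \<in> aut V E \<Longrightarrow> g \<in> aut V E \<Longrightarrow> f \<circ> g \<in> aut V E"
  unfolding aut_def by (auto intro: bij_betw_trans simp: bij_betw_apply)

lemma aut_closed: "f \<in> aut V E \<Longrightarrow> u \<in> V \<Longrightarrow> f u \<in> V"
  unfolding aut_def by (auto intro: bij_betw_apply)

lemma aut_outside: "f \<in> aut V E \<Longrightarrow> x \<notin> V \<Longrightarrow> f x = x"
  unfolding aut_def by blast

lemma aut_adj_iff: "f \<in> aut V E \<Longrightarrow> u \<in> V \<Longrightarrow> v \<in> V \<Longrightarrow> E (f u) (f v) \<longleftrightarrow> E u v"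
  unfolding aut_def by blast

lemma id_in_CT: "id \<in> CT V' E' p"
  unfolding CT_def using id_in_aut by auto

lemma is_complement_image_of_lift_hom:
  assumes G: "is_subgroup G (aut V E)" and onto: "p ` V' = V"
    and lift: "\<And>g. g \<in> G \<Longrightarrow> is_lift V' E' p g (L g)"
    and hom: "\<And>g h. g \<in> G \<Longrightarrow> h \<in> G \<Longrightarrow> L (g \<circ> h) = L g \<circ> L h"
    and L_id: "L id = id"
  shows "is_complement V' E' p G (L ` G)"
proof -
  have G_aut: "G \<subseteq> aut V E" and id_G: "id \<in> G"
    and G_comp: "\<And>g h. g \<in> G \<Longrightarrow> h \<in> G \<Longrightarrow> g \<circ> h \<in> G"
    and G_inv: "\<And>g. g \<in> G \<Longrightarrow> \<exists>h\<in>G. g \<circ> h = id \<and> h \<circ> g = id"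
    using G unfolding is_subgroup_def by blast+
  have L_inv: "L g \<circ> L h = id" if "g \<in> G" "h \<in> G" "g \<circ> h = id" for g h
    using hom[OF that(1,2)] that(3) L_id by simp
  have subgroup: "is_subgroup (L ` G) (lifted_group V' E' p G)"
    unfolding is_subgroup_def
  proof (intro conjI ballI)
    show "L ` G \<subseteq> lifted_group V' E' p G" unfolding lifted_group_def using lift by blast
    show "id \<in> L ` G" using L_id id_G by force
  next
    fix a b assume "a \<in> L ` G" "b \<in> L ` G"
    then obtain g h where "g \<in> G" "h \<in> G" "a = L g" "b = L h" by blast
    then show "a \<circ> b \<in> L ` G" using hom G_comp by (metis image_eqI)
  next
    fix a assume "a \<in> L ` G"
    then obtain g where g: "g \<in> G" "a = L g" by blast
    then obtain h where "h \<in> G" "g \<circ> h = id" "h \<circ> g = id" using G_inv by blast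
    then show "\<exists>b\<in>L ` G. a \<circ> b = id \<and> b \<circ> a = id" using g L_inv by blast
  qed
  have trivial_meet: "L ` G \<inter> CT V' E' p = {id}"
  proof
    show "{id} \<subseteq> L ` G \<inter> CT V' E' p" using id_in_CT L_id id_G by force
    show "L ` G \<inter> CT V' E' p \<subseteq> {id}"
    proof
      fix a assume a: "a \<in> L ` G \<inter> CT V' E' p"
      then obtain g where g: "g \<in> G" "a = L g" by blast
      have "g x = x" for x
      proof (cases "x \<in> V")
        case True
        then obtain z where z: "z \<in> V'" "x = p z" using onto by blast
        have "g (p z) = p (a z)" using lift[OF g(1)] z(1) g(2) unfolding is_lift_def by blast
        also have "\<dots> = p z" using a z(1) unfolding CT_def by blast
        finally show ?thesis using z(2) by simp
      next
        case False
        then show ?thesis using g(1) G_aut aut_outside by fastforce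
      qed
      then have "g = id" by (simp add: fun_eq_iff)
      then show "a \<in> {id}" using g L_id by simp
    qed
  qed
  have factorisation: "\<exists>k\<in>L ` G. \<exists>c\<in>CT V' E' p. h = k \<circ> c"
    if lifted: "h \<in> lifted_group V' E' p G" for h
  proof -
    obtain g where g: "g \<in> G" and h: "is_lift V' E' p g h"
      using lifted unfolding lifted_group_def by blast
    have h_aut: "h \<in> aut V' E'" and h_p: "\<And>x. x \<in> V' \<Longrightarrow> g (p x) = p (h x)"
      using h unfolding is_lift_def by auto
    obtain g' where g': "g' \<in> G" "g \<circ> g' = id" "g' \<circ> g = id" using G_inv g by blast
    have L_aut: "L g' \<in> aut V' E'" and L_p: "\<And>x. x \<in> V' \<Longrightarrow> g' (p x) = p (L g' x)"
      using lift[OF g'(1)] unfolding is_lift_def by auto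
    have "L g' \<circ> h \<in> CT V' E' p"
      unfolding CT_def
    proof (intro CollectI conjI ballI)
      show "L g' \<circ> h \<in> aut V' E'" by (rule aut_comp[OF L_aut h_aut])
    next
      fix x assume x: "x \<in> V'"
      have "p ((L g' \<circ> h) x) = g' (p (h x))" using L_p[OF aut_closed[OF h_aut x]] by simp
      also have "\<dots> = (g' \<circ> g) (p x)" using h_p[OF x] by simp
      finally show "p ((L g' \<circ> h) x) = p x" using g'(3) by simp
    qed
    moreover have "h = L g \<circ> (L g' \<circ> h)" using L_inv[OF g g'(1,2)] by (simp flip: comp_assoc)
    ultimately show ?thesis using g by blast
  qed
  show ?thesis
    unfolding is_complement_def using subgroup trivial_meet factorisation by blast
qed

locale canonical_double_cover_iso =
  fixes V' :: "'b set" and E' :: "'b \<Rightarrow> 'b \<Rightarrow> bool"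
    and V :: "'a set" and E :: "'a \<Rightarrow> 'a \<Rightarrow> bool"
    and p :: "'b \<Rightarrow> 'a" and \<phi> :: "'b \<Rightarrow> 'a \<times> bool"
  assumes bij: "bij_betw \<phi> V' (V \<times> UNIV)"
    and cdc_edge_iff: "\<And>x y. x \<in> V' \<Longrightarrow> y \<in> V' \<Longrightarrow> cdc_edge E (\<phi> x) (\<phi> y) \<longleftrightarrow> E' x y"
    and fst_\<phi>: "\<And>x. x \<in> V' \<Longrightarrow> fst (\<phi> x) = p x"
begin

definition lift :: "('a \<Rightarrow> 'a) \<Rightarrow> 'b \<Rightarrow> 'b" where
  "lift g z = (if z \<in> V' then inv_into V' \<phi> (g (p z), snd (\<phi> z)) else z)"

definition sheet :: "'b set" where
  "sheet = {z \<in> V'. snd (\<phi> z)}"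

lemma \<phi>_eq: "z \<in> V' \<Longrightarrow> \<phi> z = (p z, snd (\<phi> z))"
  using fst_\<phi> by (metis prod.collapse)

lemma \<phi>_inject: "z \<in> V' \<Longrightarrow> w \<in> V' \<Longrightarrow> \<phi> z = \<phi> w \<Longrightarrow> z = w"
  using bij by (metis bij_betw_imp_inj_on inj_onD)

lemma p_in_V:
  assumes "z \<in> V'" shows "p z \<in> V"
proof -
  have "\<phi> z \<in> V \<times> UNIV" using bij assms by (rule bij_betw_apply)
  then show ?thesis using fst_\<phi>[OF assms] by auto
qed

lemma p_onto: "p ` V' = V"
proof -
  have "p ` V' = fst ` \<phi> ` V'" using fst_\<phi> by (force simp: image_image)
  also have "\<dots> = V" using bij by (simp add: bij_betw_def)
  finally show ?thesis .
qed

lemma inv_\<phi>: "u \<in> V \<Longrightarrow> inv_into V' \<phi> (u, i) \<in> V' \<and> \<phi> (inv_into V' \<phi> (u, i)) = (u, i)"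
  using bij by (simp add: bij_betw_def inv_into_into f_inv_into_f)

lemma
  assumes "g ` V \<subseteq> V" and "z \<in> V'"
  shows lift_closed: "lift g z \<in> V'" and \<phi>_lift: "\<phi> (lift g z) = (g (p z), snd (\<phi> z))"
proof -
  have "g (p z) \<in> V" using assms p_in_V by blast
  then show "lift g z \<in> V'" "\<phi> (lift g z) = (g (p z), snd (\<phi> z))"
    using inv_\<phi> assms(2) by (simp_all add: lift_def)
qed

lemma p_lift: "g ` V \<subseteq> V \<Longrightarrow> z \<in> V' \<Longrightarrow> p (lift g z) = g (p z)"
  using \<phi>_lift fst_\<phi>[OF lift_closed] by (metis fst_conv)

lemma lift_comp:
  assumes g: "g ` V \<subseteq> V" and h: "h ` V \<subseteq> V"
  shows "lift (g \<circ> h) = lift g \<circ> lift h"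
proof
  fix z show "lift (g \<circ> h) z = (lift g \<circ> lift h) z"
  proof (cases "z \<in> V'")
    case True
    have gh: "(g \<circ> h) ` V \<subseteq> V" using g h by auto
    have "\<phi> (lift (g \<circ> h) z) = \<phi> (lift g (lift h z))"
      using True \<phi>_lift[OF gh] \<phi>_lift[OF g lift_closed[OF h]] \<phi>_lift[OF h] p_lift[OF h] by simp
    then show ?thesis
      using \<phi>_inject lift_closed[OF gh True] lift_closed[OF g lift_closed[OF h True]] by simp
  qed (simp add: lift_def)
qed

lemma lift_id: "lift id = id"
proof
  fix z show "lift id z = id z"
  proof (cases "z \<in> V'")
    case True
    then show ?thesis using \<phi>_inject \<phi>_lift[of id] lift_closed[of id] \<phi>_eq by simp
  qed (simp add: lift_def)
qed

lemma lift_cong: "(\<And>u. u \<in> V \<Longrightarrow> g u = h u) \<Longrightarrow> lift g = lift h"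
  using p_in_V by (auto simp: lift_def)

lemma lift_in_aut:
  assumes g: "g \<in> aut V E"
  shows "lift g \<in> aut V' E'"
proof -
  define g' where "g' = inv_into V g"
  have g_bij: "bij_betw g V V" using g unfolding aut_def by blast
  have gV: "g ` V \<subseteq> V" and g'V: "g' ` V \<subseteq> V"
    using g_bij unfolding g'_def by (auto simp: bij_betw_def inv_into_into)
  have "lift g' \<circ> lift g = lift (g' \<circ> g)" by (rule lift_comp[OF g'V gV, symmetric])
  also have "\<dots> = lift id" using g_bij by (intro lift_cong) (simp add: g'_def bij_betw_inv_into_left)
  finally have left: "lift g' \<circ> lift g = id" by (simp add: lift_id)
  have "lift g \<circ> lift g' = lift (g \<circ> g')" by (rule lift_comp[OF gV g'V, symmetric])
  also have "\<dots> = lift id" using g_bij by (intro lift_cong) (simp add: g'_def bij_betw_inv_into_right)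
  finally have right: "lift g \<circ> lift g' = id" by (simp add: lift_id)
  have "bij_betw (lift g) V' V'"
  proof (rule bij_betw_byWitness[where f' = "lift g'"])
    show "\<forall>z\<in>V'. lift g' (lift g z) = z" using left by (metis comp_apply id_apply)
    show "\<forall>z\<in>V'. lift g (lift g' z) = z" using right by (metis comp_apply id_apply)
    show "lift g ` V' \<subseteq> V'" "lift g' ` V' \<subseteq> V'" using lift_closed gV g'V by blast+
  qed
  moreover have "E' (lift g x) (lift g y) \<longleftrightarrow> E' x y" if "x \<in> V'" "y \<in> V'" for x y
  proof -
    have "E' (lift g x) (lift g y) \<longleftrightarrow> cdc_edge E (\<phi> (lift g x)) (\<phi> (lift g y))"
      using cdc_edge_iff lift_closed[OF gV] that by blast
    also have "\<dots> \<longleftrightarrow> cdc_edge E (\<phi> x) (\<phi> y)"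
      using that \<phi>_lift[OF gV] fst_\<phi> aut_adj_iff[OF g] p_in_V by (simp add: cdc_edge_def)
    also have "\<dots> \<longleftrightarrow> E' x y" using cdc_edge_iff that by blast
    finally show ?thesis .
  qed
  ultimately show ?thesis unfolding aut_def by (auto simp: lift_def)
qed

lemma is_lift_lift: "g \<in> aut V E \<Longrightarrow> is_lift V' E' p g (lift g)"
  unfolding is_lift_def using lift_in_aut p_lift aut_closed by (metis image_subsetI)

lemma lift_image_sheet:
  assumes g: "g \<in> aut V E"
  shows "lift g ` sheet = sheet"
proof -
  have gV: "g ` V \<subseteq> V" using aut_closed[OF g] by blast
  have snd_lift: "snd (\<phi> (lift g z)) = snd (\<phi> z)" if "z \<in> V'" for z
    using \<phi>_lift[OF gV that] by simp
  have onto: "lift g ` V' = V'" using lift_in_aut[OF g] unfolding aut_def bij_betw_def by blast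
  show ?thesis
  proof (intro equalityI subsetI)
    fix w assume "w \<in> lift g ` sheet"
    then show "w \<in> sheet" unfolding sheet_def using snd_lift lift_closed[OF gV] by auto
  next
    fix w assume w: "w \<in> sheet"
    then obtain z where z: "z \<in> V'" "w = lift g z" using onto unfolding sheet_def by blast
    then have "z \<in> sheet" using w snd_lift unfolding sheet_def by simp
    then show "w \<in> lift g ` sheet" using z(2) by blast
  qed
qed

lemma sheet_is_section: "is_section V' V p sheet"
  unfolding is_section_def
proof (intro conjI ballI)
  show "sheet \<subseteq> V'" unfolding sheet_def by blast
next
  fix v assume v: "v \<in> V"
  define z\<^sub>0 where "z\<^sub>0 = inv_into V' \<phi> (v, True)"
  have z\<^sub>0: "z\<^sub>0 \<in> V'" "\<phi> z\<^sub>0 = (v, True)" using inv_\<phi>[OF v] unfolding z\<^sub>0_def by blast+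
  have "sheet \<inter> fibre V' p v = {z\<^sub>0}"
  proof (intro equalityI subsetI)
    fix z assume "z \<in> sheet \<inter> fibre V' p v"
    then have "z \<in> V'" "\<phi> z = (v, True)"
      using fst_\<phi> unfolding sheet_def fibre_def by (auto simp: prod_eq_iff)
    then show "z \<in> {z\<^sub>0}" using z\<^sub>0 \<phi>_inject by force
  next
    fix z assume "z \<in> {z\<^sub>0}"
    then show "z \<in> sheet \<inter> fibre V' p v"
      using z\<^sub>0 fst_\<phi>[OF z\<^sub>0(1)] unfolding sheet_def fibre_def by auto
  qed
  then show "card (sheet \<inter> fibre V' p v) = 1" by simp
qed

lemma sectional_complement:
  assumes "is_subgroup G (aut V E)"
  shows "is_complement V' E' p G (lift ` G) \<and> sectional V' V p (lift ` G)"
proof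
  have G_aut: "G \<subseteq> aut V E" using assms unfolding is_subgroup_def by blast
  have G_closed: "g ` V \<subseteq> V" if "g \<in> G" for g
    using aut_closed[of g V E] G_aut that by blast
  show "is_complement V' E' p G (lift ` G)"
  proof (rule is_complement_image_of_lift_hom[OF assms p_onto])
    show "is_lift V' E' p g (lift g)" if "g \<in> G" for g
      using G_aut that is_lift_lift by blast
    show "lift (g \<circ> h) = lift g \<circ> lift h" if "g \<in> G" "h \<in> G" for g h
      by (rule lift_comp[OF G_closed[OF that(1)] G_closed[OF that(2)]])
  qed (rule lift_id)
  have "\<forall>k\<in>lift ` G. k ` sheet = sheet" using lift_image_sheet G_aut by blast
  then show "sectional V' V p (lift ` G)" unfolding sectional_def using sheet_is_section by blast
qed

end

lemma complement_subset_aut: "is_complement V' E' p G K \<Longrightarrow> K \<subseteq> aut V' E'"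
  unfolding is_complement_def is_subgroup_def lifted_group_def is_lift_def by blast

lemma complement_contains_lift:
  assumes adm: "admissible V' E' p G" and K: "is_complement V' E' p G K" and g: "g \<in> G"
  obtains k where "k \<in> K" and "\<And>z. z \<in> V' \<Longrightarrow> p (k z) = g (p z)"
proof -
  obtain h where h: "is_lift V' E' p g h" using adm g unfolding admissible_def by blast
  then have "h \<in> lifted_group V' E' p G" unfolding lifted_group_def using g by blast
  then obtain k c where k: "k \<in> K" and c: "c \<in> CT V' E' p" and hkc: "h = k \<circ> c"
    using K unfolding is_complement_def by blast
  have c_onto: "c ` V' = V'" and p_c: "\<And>x. x \<in> V' \<Longrightarrow> p (c x) = p x"
    using c unfolding CT_def aut_def bij_betw_def by auto
  have "p (k z) = g (p z)" if "z \<in> V'" for z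
  proof -
    obtain w where w: "w \<in> V'" "z = c w" using c_onto \<open>z \<in> V'\<close> by blast
    have "p (k z) = p (h w)" using hkc w(2) by simp
    also have "\<dots> = g (p w)" using h w(1) unfolding is_lift_def by simp
    also have "\<dots> = g (p z)" using p_c w by simp
    finally show ?thesis .
  qed
  then show ?thesis using k that by blast
qed

lemma section_meets_fibre:
  assumes S: "is_section V' V p S" and v: "v \<in> V"
  shows "\<exists>!x. x \<in> S \<and> p x = v"
proof -
  have "card (S \<inter> fibre V' p v) = 1" using S v unfolding is_section_def by blast
  then obtain a where a: "S \<inter> fibre V' p v = {a}" by (auto simp: card_1_singleton_iff)
  have "S \<subseteq> V'" using S unfolding is_section_def by blast
  then have "x \<in> S \<and> p x = v \<longleftrightarrow> x = a" for x
    using a unfolding fibre_def by blast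
  then show ?thesis by auto
qed

locale graph_two_cover =
  fixes V' :: "'b set" and E' :: "'b \<Rightarrow> 'b \<Rightarrow> bool"
    and V :: "'a set" and E :: "'a \<Rightarrow> 'a \<Rightarrow> bool" and p :: "'b \<Rightarrow> 'a"
  assumes simple: "simple_graph V' E'" and two_cover: "two_cover V' E' V E p"
begin

definition swap :: "'b \<Rightarrow> 'b" where
  "swap = (SOME c. c \<noteq> id \<and> CT V' E' p = {id, c})"

lemma
  shows swap_ne_id: "swap \<noteq> id" and CT_eq: "CT V' E' p = {id, swap}"
proof -
  have "card (CT V' E' p) = 2" using two_cover unfolding two_cover_def by blast
  then obtain a b where ab: "CT V' E' p = {a, b}" "a \<noteq> b" by (auto simp: card_2_iff)
  define c where "c = (if a = id then b else a)"
  have "c \<noteq> id \<and> CT V' E' p = {id, c}" using ab id_in_CT[of V' E' p] unfolding c_def by auto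
  then have "swap \<noteq> id \<and> CT V' E' p = {id, swap}"
    unfolding swap_def by (rule someI[where P = "\<lambda>c. c \<noteq> id \<and> CT V' E' p = {id, c}"])
  then show "swap \<noteq> id" "CT V' E' p = {id, swap}" by blast+
qed

lemma covering: "covering_projection V' E' V E p"
  using two_cover unfolding two_cover_def by blast

lemma adj_in_V': "E' x y \<Longrightarrow> x \<in> V' \<and> y \<in> V'"
  using simple unfolding simple_graph_def by blast

lemma adj_sym: "E' x y \<Longrightarrow> E' y x"
  using simple unfolding simple_graph_def by blast

lemma p_in_V: "z \<in> V' \<Longrightarrow> p z \<in> V"
  using covering unfolding covering_projection_def by blast

lemma p_adj: "E' x y \<Longrightarrow> E (p x) (p y)"
  using covering unfolding covering_projection_def by blast

lemma swap_in_aut: "swap \<in> aut V' E'" and p_swap: "z \<in> V' \<Longrightarrow> p (swap z) = p z"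
  using CT_eq unfolding CT_def by blast+

lemma swap_closed: "z \<in> V' \<Longrightarrow> swap z \<in> V'"
  using swap_in_aut by (rule aut_closed)

lemma swap_adj_iff: "x \<in> V' \<Longrightarrow> y \<in> V' \<Longrightarrow> E' (swap x) (swap y) \<longleftrightarrow> E' x y"
  using swap_in_aut by (rule aut_adj_iff)

lemma CT_transitive_on_fibre:
  assumes "z \<in> V'" and "w \<in> V'" and "p w = p z"
  shows "\<exists>!c. c \<in> CT V' E' p \<and> c z = w"
proof -
  have regular: "\<And>v x y. v \<in> V \<Longrightarrow> x \<in> fibre V' p v \<Longrightarrow> y \<in> fibre V' p v
      \<Longrightarrow> \<exists>!c. c \<in> CT V' E' p \<and> c x = y"
    using two_cover unfolding two_cover_def by blast
  show ?thesis by (rule regular[of "p z"]) (use assms p_in_V in \<open>auto simp: fibre_def\<close>)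
qed

lemma swap_no_fixpoint:
  assumes z: "z \<in> V'" shows "swap z \<noteq> z"
proof
  assume fixed: "swap z = z"
  have unique: "\<forall>c d. c \<in> CT V' E' p \<and> c z = z \<and> d \<in> CT V' E' p \<and> d z = z \<longrightarrow> c = d"
    using CT_transitive_on_fibre[OF z z refl] by blast
  have "swap \<in> CT V' E' p" "id \<in> CT V' E' p" using CT_eq by auto
  then have "swap = id" using unique[rule_format, of swap id] fixed by simp
  then show False using swap_ne_id by contradiction
qed

lemma same_fibre_cases:
  assumes "z \<in> V'" and "w \<in> V'" and "p w = p z"
  shows "w = z \<or> w = swap z"
proof -
  obtain c where "c \<in> CT V' E' p" "c z = w" using CT_transitive_on_fibre[OF assms] by blast
  then show ?thesis using CT_eq by auto
qed

lemma edge_lift_unique: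
  assumes "E' x y\<^sub>1" and "E' x y\<^sub>2" and "p y\<^sub>1 = p y\<^sub>2"
  shows "y\<^sub>1 = y\<^sub>2"
proof -
  have "x \<in> V'" using adj_in_V' assms(1) by blast
  then have "inj_on p {y \<in> V'. E' x y}"
    using covering unfolding covering_projection_def bij_betw_def by blast
  then show ?thesis using assms adj_in_V' by (auto dest: inj_onD)
qed

lemma lifts_of_edge:
  assumes ab: "E' a b" and xy: "E' x y" and "p x = p a" and "p y = p b"
  shows "(x = a \<and> y = b) \<or> (x = swap a \<and> y = swap b)"
proof -
  have V': "a \<in> V'" "b \<in> V'" "x \<in> V'" "y \<in> V'" using ab xy adj_in_V' by blast+
  from same_fibre_cases[OF V'(1,3) \<open>p x = p a\<close>] show ?thesis
  proof
    assume "x = a"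
    then show ?thesis using edge_lift_unique[of a y b] xy ab \<open>p y = p b\<close> by simp
  next
    assume x: "x = swap a"
    have "E' x (swap b)" using swap_adj_iff[OF V'(1,2)] ab x by simp
    moreover have "p y = p (swap b)" using p_swap[OF V'(2)] \<open>p y = p b\<close> by simp
    ultimately have "y = swap b" using edge_lift_unique[OF xy] by blast
    then show ?thesis using x by simp
  qed
qed

lemma section_swap_iff:
  assumes S: "is_section V' V p S" and z: "z \<in> V'"
  shows "z \<in> S \<longleftrightarrow> swap z \<notin> S"
proof -
  obtain s where s: "s \<in> S" "p s = p z" and unique: "\<And>x. x \<in> S \<Longrightarrow> p x = p z \<Longrightarrow> x = s"
    using section_meets_fibre[OF S p_in_V[OF z]] by blast
  have "s \<in> V'" using S s(1) unfolding is_section_def by blast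
  then have "s = z \<or> s = swap z" using same_fibre_cases[OF z] s(2) by blast
  then show ?thesis
  proof
    assume "s = z"
    have "swap z \<notin> S"
    proof
      assume "swap z \<in> S"
      then have "swap z = z" using unique p_swap[OF z] \<open>s = z\<close> by simp
      then show False using swap_no_fixpoint[OF z] by contradiction
    qed
    then show ?thesis using s(1) \<open>s = z\<close> by simp
  next
    assume "s = swap z"
    have "z \<notin> S"
    proof
      assume "z \<in> S"
      then have "z = swap z" using unique \<open>s = swap z\<close> by simp
      then show False using swap_no_fixpoint[OF z] by simp
    qed
    then show ?thesis using s(1) \<open>s = swap z\<close> by simp
  qed
qed

lemma ex_edge_crossing_section:
  assumes conn: "connected_graph V' E'" and S: "is_section V' V p S"
  shows "\<exists>x y. E' x y \<and> (x \<in> S \<longleftrightarrow> y \<notin> S)"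
proof (rule ccontr)
  assume "\<not> ?thesis"
  then have stay: "\<And>x y. E' x y \<Longrightarrow> x \<in> S \<Longrightarrow> y \<in> S" by blast
  obtain z where z: "z \<in> V'" using conn unfolding connected_graph_def by blast
  obtain a where a: "a \<in> V'" "a \<in> S"
    using section_swap_iff[OF S z] z swap_closed[OF z] by blast
  have "E'\<^sup>*\<^sup>* a (swap a)" using conn a(1) swap_closed[OF a(1)] unfolding connected_graph_def by blast
  then have "swap a \<in> S"
  proof (induction rule: rtranclp_induct)
    case base
    then show ?case using a(2) .
  next
    case (step y z)
    then show ?case using stay by blast
  qed
  then show False using section_swap_iff[OF S a(1)] a(2) by blast
qed

lemma edges_stay_if_edge_inside_section:
  assumes S: "is_section V' V p S" and et: "edge_transitive E G"
    and lifts: "\<And>g. g \<in> G \<Longrightarrow> \<exists>k\<in>aut V' E'. k ` S = S \<and> (\<forall>z\<in>V'. p (k z) = g (p z))"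
    and ab: "E' a b" "a \<in> S" "b \<in> S" and xy: "E' x y"
  shows "x \<in> S \<longleftrightarrow> y \<in> S"
proof -
  have over_inner_edge: "x \<in> S \<longleftrightarrow> y \<in> S"
    if "E' s t" "s \<in> S" "t \<in> S" "p x = p s" "p y = p t" for s t
  proof -
    have "s \<in> V'" "t \<in> V'" using that(1) adj_in_V' by blast+
    then have "swap s \<notin> S" "swap t \<notin> S" using section_swap_iff[OF S] that(2,3) by blast+
    then show ?thesis using lifts_of_edge[OF that(1) xy that(4,5)] that(2,3) by blast
  qed
  have a_b: "a \<in> V'" "b \<in> V'" using ab(1) adj_in_V' by blast+
  obtain g where g: "g \<in> G" "{g (p a), g (p b)} = {p x, p y}"
    using et p_adj[OF ab(1)] p_adj[OF xy] unfolding edge_transitive_def by blast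
  obtain k where k: "k \<in> aut V' E'" "k ` S = S" "\<And>z. z \<in> V' \<Longrightarrow> p (k z) = g (p z)"
    using lifts[OF g(1)] by blast
  have kS: "k a \<in> S" "k b \<in> S" using k(2) ab(2,3) by blast+
  have k_adj: "E' (k a) (k b)" using aut_adj_iff[OF k(1) a_b] ab(1) by simp
  have "{p (k a), p (k b)} = {p x, p y}" using k(3) a_b g(2) by simp
  then consider "p x = p (k a)" "p y = p (k b)" | "p x = p (k b)" "p y = p (k a)"
    by (auto simp: doubleton_eq_iff)
  then show ?thesis
  proof cases
    case 1
    then show ?thesis using over_inner_edge[OF k_adj kS] by blast
  next
    case 2
    then show ?thesis using over_inner_edge[OF adj_sym[OF k_adj] kS(2,1)] by blast
  qed
qed

lemma edges_cross_section:
  assumes conn: "connected_graph V' E'" and S: "is_section V' V p S" and et: "edge_transitive E G"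
    and lifts: "\<And>g. g \<in> G \<Longrightarrow> \<exists>k\<in>aut V' E'. k ` S = S \<and> (\<forall>z\<in>V'. p (k z) = g (p z))"
    and xy: "E' x y"
  shows "x \<in> S \<longleftrightarrow> y \<notin> S"
proof (rule ccontr)
  assume not_crossing: "\<not> ?thesis"
  obtain a b where ab: "E' a b" "a \<in> S" "b \<in> S"
  proof (cases "x \<in> S")
    case True
    then show ?thesis using that xy not_crossing by blast
  next
    case False
    have V': "x \<in> V'" "y \<in> V'" using xy adj_in_V' by blast+
    then have "swap x \<in> S" "swap y \<in> S"
      using False not_crossing section_swap_iff[OF S] by blast+
    moreover have "E' (swap x) (swap y)" using swap_adj_iff[OF V'] xy by simp
    ultimately show ?thesis using that by blast
  qed
  have "\<And>x y. E' x y \<Longrightarrow> x \<in> S \<longleftrightarrow> y \<in> S"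
    using edges_stay_if_edge_inside_section[OF S et lifts ab] by blast
  then show False using ex_edge_crossing_section[OF conn S] by blast
qed

lemma canonical_double_cover_if_edges_cross:
  assumes S: "is_section V' V p S" and cross: "\<And>x y. E' x y \<Longrightarrow> x \<in> S \<longleftrightarrow> y \<notin> S"
  shows "is_canonical_double_cover V' E' V E p"
proof -
  define \<phi> where "\<phi> z = (p z, z \<in> S)" for z
  have "inj_on \<phi> V'"
  proof (rule inj_onI)
    fix z w assume z: "z \<in> V'" and w: "w \<in> V'" and "\<phi> z = \<phi> w"
    then have "p w = p z" "w \<in> S \<longleftrightarrow> z \<in> S" unfolding \<phi>_def by auto
    then show "z = w" using same_fibre_cases[OF z w] section_swap_iff[OF S z] by auto
  qed
  moreover have "\<phi> ` V' = V \<times> UNIV"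
  proof (intro equalityI subsetI)
    fix y assume "y \<in> \<phi> ` V'"
    then show "y \<in> V \<times> UNIV" unfolding \<phi>_def using p_in_V by auto
  next
    fix y :: "'a \<times> bool" assume "y \<in> V \<times> UNIV"
    then obtain v i where y: "y = (v, i)" "v \<in> V" by blast
    then obtain z where z: "z \<in> V'" "p z = v"
      using covering unfolding covering_projection_def by blast
    have "\<phi> z = y \<or> \<phi> (swap z) = y"
      unfolding \<phi>_def using y z p_swap[OF z(1)] section_swap_iff[OF S z(1)] by auto
    then show "y \<in> \<phi> ` V'" using z(1) swap_closed[OF z(1)] by blast
  qed
  moreover have "cdc_edge E (\<phi> x) (\<phi> y) \<longleftrightarrow> E' x y" if x: "x \<in> V'" and y: "y \<in> V'" for x y
  proof
    assume "E' x y"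
    then show "cdc_edge E (\<phi> x) (\<phi> y)" unfolding cdc_edge_def \<phi>_def using p_adj cross by auto
  next
    assume "cdc_edge E (\<phi> x) (\<phi> y)"
    then have adj: "E (p x) (p y)" and side: "y \<in> S \<longleftrightarrow> x \<notin> S"
      unfolding cdc_edge_def \<phi>_def by auto
    have "p y \<in> p ` {y' \<in> V'. E' x y'}"
      using covering x adj p_in_V[OF y] unfolding covering_projection_def bij_betw_def by blast
    then obtain y' where y': "y' \<in> V'" "E' x y'" "p y' = p y" by auto
    have "y = y' \<or> y = swap y'" using same_fibre_cases[OF y'(1) y] y'(3) by simp
    moreover have "y' \<in> S \<longleftrightarrow> x \<notin> S" using cross[OF y'(2)] by blast
    ultimately have "y = y'" using section_swap_iff[OF S y'(1)] side by auto
    then show "E' x y" using y'(2) by simp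
  qed
  moreover have "fst (\<phi> x) = p x" for x unfolding \<phi>_def by simp
  ultimately show ?thesis unfolding is_canonical_double_cover_def bij_betw_def by blast
qed

lemma canonical_double_cover_if_sectional_complement:
  assumes conn: "connected_graph V' E'" and et: "edge_transitive E G"
    and adm: "admissible V' E' p G" and K: "is_complement V' E' p G K"
    and sectional: "sectional V' V p K"
  shows "is_canonical_double_cover V' E' V E p"
proof -
  obtain S where S: "is_section V' V p S" and K_S: "\<And>k. k \<in> K \<Longrightarrow> k ` S = S"
    using sectional unfolding sectional_def by blast
  have "\<exists>k\<in>aut V' E'. k ` S = S \<and> (\<forall>z\<in>V'. p (k z) = g (p z))" if g: "g \<in> G" for g
  proof -
    obtain k where "k \<in> K" "\<And>z. z \<in> V' \<Longrightarrow> p (k z) = g (p z)"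
      using complement_contains_lift[OF adm K g] by blast
    then show ?thesis using complement_subset_aut[OF K] K_S by blast
  qed
  then show ?thesis
    using canonical_double_cover_if_edges_cross[OF S] edges_cross_section[OF conn S et] by blast
qed

end

theorem proposition3p3:
  fixes V :: "'a set" and E :: "'a \<Rightarrow> 'a \<Rightarrow> bool"
    and V' :: "'b set" and E' :: "'b \<Rightarrow> 'b \<Rightarrow> bool"
    and p :: "'b \<Rightarrow> 'a" and G :: "('a \<Rightarrow> 'a) set"
  assumes "simple_graph V E" and "simple_graph V' E'"
    and "connected_graph V E" and "connected_graph V' E'"
    and "two_cover V' E' V E p"
    and "is_subgroup G (aut V E)"
    and "vertex_transitive V G" and "edge_transitive E G"
    and "admissible V' E' p G"
  shows "(\<exists>K. is_complement V' E' p G K \<and> sectional V' V p K)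
           \<longleftrightarrow> is_canonical_double_cover V' E' V E p"
proof
  assume "\<exists>K. is_complement V' E' p G K \<and> sectional V' V p K"
  then obtain K where "is_complement V' E' p G K" and "sectional V' V p K" by blast
  interpret graph_two_cover V' E' V E p
    using assms(2,5) by unfold_locales
  show "is_canonical_double_cover V' E' V E p"
    by (rule canonical_double_cover_if_sectional_complement) fact+
next
  assume "is_canonical_double_cover V' E' V E p"
  then obtain \<phi> where "canonical_double_cover_iso V' E' V E p \<phi>"
    unfolding is_canonical_double_cover_def canonical_double_cover_iso_def by blast
  then show "\<exists>K. is_complement V' E' p G K \<and> sectional V' V p K"
    using canonical_double_cover_iso.sectional_complement[OF _ assms(6)] by blast
qed

end
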